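(* For Lebesgue almost all $x\in(0,1)$, $$\liminf_{n\to\infty}\frac{\log R_n(x)-\log n}{\log\log n}=-\infty\quad\text{and}\quad\liminf_{n\to\infty}\frac{\log M_n(x)-\log n}{\log\log n}=0.$$
   Context: Signed Engel expansion: define $T\colon[0,1)\to[0,1)$ by: for $k\in\mathbb{N}$, $Tx=\lceil 1/x\rceil x-1$ if $x\in(\frac{1}{2k},\frac{1}{2k-1})$; $Tx=1-\lfloor 1/x\rfloor x$ if $x\in(\frac{1}{2k+1},\frac{1}{2k})$; $Tx=0$ if $x\in\{0\}\cup\{1/n\colon n\ge 2\}$. For $x\in(0,1)$, $d_1(x)=\lceil 1/x\rceil$ if $x\in[\frac{1}{2k},\frac{1}{2k-1})$ for some $k\in\mathbb{N}$, and $d_1(x)=\lfloor 1/x\rfloor$ if $x\in[\frac{1}{2k+1},\frac{1}{2k})$ for some $k\in\mathbb{N}$; $d_{n+1}(x)=d_1(T^nx)$. For irrational $x\in(0,1)$, $R_1(x)=d_1(x)$, $R_n(x)=d_n(x)/d_{n-1}(x)$ for $n\ge2$, and $M_n(x)=\max\{R_k(x)\colon 1\le k\le n\}$. *)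

theory Defs
  imports "HOL-Analysis.Analysis"
begin

text \<open>The signed Engel map T on [0,1). Outside the two families of open intervals
  (i.e. at 0 and at the points 1/n, n \<ge> 2) it is 0.\<close>
definition sengel_T :: "real \<Rightarrow> real" where
  "sengel_T x =
     (if \<exists>k::nat. k \<ge> 1 \<and> 1 / (2 * real k) < x \<and> x < 1 / (2 * real k - 1)
      then real_of_int (ceiling (1 / x)) * x - 1
      else if \<exists>k::nat. k \<ge> 1 \<and> 1 / (2 * real k + 1) < x \<and> x < 1 / (2 * real k)
      then 1 - real_of_int (floor (1 / x)) * x
      else 0)"

text \<open>First digit d_1 (value 0 outside (0,1), where it is not used).\<close>
definition sengel_d1 :: "real \<Rightarrow> real" where
  "sengel_d1 x =
     (if \<exists>k::nat. k \<ge> 1 \<and> 1 / (2 * real k) \<le> x \<and> x < 1 / (2 * real k - 1)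
      then real_of_int (ceiling (1 / x))
      else if \<exists>k::nat. k \<ge> 1 \<and> 1 / (2 * real k + 1) \<le> x \<and> x < 1 / (2 * real k)
      then real_of_int (floor (1 / x))
      else 0)"

definition sengel_d :: "nat \<Rightarrow> real \<Rightarrow> real" where
  "sengel_d n x = sengel_d1 ((sengel_T ^^ (n - 1)) x)"

definition sengel_R :: "nat \<Rightarrow> real \<Rightarrow> real" where
  "sengel_R n x = (if n \<le> 1 then sengel_d 1 x else sengel_d n x / sengel_d (n - 1) x)"

definition sengel_M :: "nat \<Rightarrow> real \<Rightarrow> real" where
  "sengel_M n x = Max ((\<lambda>k. sengel_R k x) ` {1..n})"

end

theory Submission
  imports Defs "HOL-Real_Asymp.Real_Asymp"
begin

(* Off the countable set of points 1/n, the digit d_1 and the map T are given by closed formulas: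
   on the branch (1/(n+1), 1/n) the digit is the even number d in {n, n+1}, and T is affine with
   slope of modulus d and maps the branch onto (0, 1/j), where j is the other element of {n, n+1}.
   As the image is again an interval (0, 1/j), the event "T y lies in F(d_1 y)" has relative measure
   at most p in (0, 1/j) as soon as every F(d) has relative measure at most p in the corresponding
   image interval. Iterating this renewal inequality along the orbit gives two estimates that are
   uniform in the time k: R_(k+2) > t has probability at most 3/t, and k consecutive ratios below m
   have probability at most (1 - 1/(3m))^k. The first estimate with t = sqrt n gives R_n <= sqrt n
   infinitely often, and with t = n ln ln n and a union bound over the first n ratios it gives
   M_n <= n ln ln n infinitely often. The second one, with Borel-Cantelli along n = 2^i, gives
   M_n >= n / (24 ln (2 ln n + 1)) eventually. *)

section \<open>The branches of the signed Engel map\<close>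

(* Closed forms of sengel_d1 and sengel_T: they agree with them on every branch interval
   (sengel_d1_T_branch), that is off the points 1/n, and they are Borel measurable. *)
definition engel_digit :: "real \<Rightarrow> real" where
  "engel_digit y = 2 * of_int \<lceil>(1 / y - 1) / 2\<rceil>"

definition engel_shift :: "real \<Rightarrow> real" where
  "engel_shift y = \<bar>engel_digit y * y - 1\<bar>"

(* On branch n the first digit is branch_digit n and the map is branch_map n, which sends the
   branch onto {0<..<1 / branch_image_den n}. *)
definition branch :: "nat \<Rightarrow> real set" where
  "branch n = {1 / (real n + 1)<..<1 / real n}"

definition branch_digit :: "nat \<Rightarrow> nat" where
  "branch_digit n = (if odd n then n + 1 else n)"

definition branch_image_den :: "nat \<Rightarrow> nat" where
  "branch_image_den n = (if odd n then n else n + 1)"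

definition branch_map :: "nat \<Rightarrow> real \<Rightarrow> real" where
  "branch_map n y = (if odd n then real (branch_digit n) * y - 1 else 1 - real (branch_digit n) * y)"

lemma branch_digit_ge_two: "n \<ge> 1 \<Longrightarrow> branch_digit n \<ge> 2"
  unfolding branch_digit_def by presburger

lemma branch_image_den_ge_one: "n \<ge> 1 \<Longrightarrow> branch_image_den n \<ge> 1"
  unfolding branch_image_den_def by auto

lemma branch_image_den_bounds:
  "branch_digit n \<le> branch_image_den n + 1" "branch_image_den n \<le> branch_digit n + 1"
  unfolding branch_digit_def branch_image_den_def by auto

lemma branch_digit_mult_image_den: "branch_digit n * branch_image_den n = n * (n + 1)"
  unfolding branch_digit_def branch_image_den_def by auto

lemma mem_branch_iff:
  "y \<in> branch n \<longleftrightarrow> n \<ge> 1 \<and> 0 < y \<and> real n < 1 / y \<and> 1 / y < real n + 1"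
proof (cases "n = 0")
  case True
  then show ?thesis unfolding branch_def by auto
next
  case False
  then show ?thesis unfolding branch_def by (auto simp: field_simps)
qed

lemma branch_eq_floor:
  assumes "y \<in> branch n"
  shows "n = nat \<lfloor>1 / y\<rfloor>"
proof -
  have "\<lfloor>1 / y\<rfloor> = int n"
    using assms unfolding mem_branch_iff by (simp add: floor_eq_iff)
  then show ?thesis by simp
qed

lemma disjoint_family_branch: "disjoint_family branch"
  unfolding disjoint_family_on_def using branch_eq_floor by blast

lemma ex_mem_branch:
  assumes "0 < y" "y < 1" "y \<notin> range (\<lambda>n. 1 / real n)"
  shows "\<exists>n. y \<in> branch n"
proof -
  have "1 < 1 / y" using assms by simp
  then have "1 \<le> \<lfloor>1 / y\<rfloor>" by (simp add: le_floor_iff)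
  then obtain n :: nat where n: "\<lfloor>1 / y\<rfloor> = int n" "n \<ge> 1"
    by (cases "\<lfloor>1 / y\<rfloor>") auto
  have "real n \<noteq> 1 / y"
  proof
    assume "real n = 1 / y"
    then have "y = 1 / real n" using assms(1) n(2) by (simp add: field_simps)
    then show False using assms(3) by blast
  qed
  moreover have "real n \<le> 1 / y" "1 / y < real n + 1"
    using n(1) by linarith+
  ultimately show ?thesis
    using assms(1) n(2) unfolding mem_branch_iff by (intro exI[of _ n]) linarith
qed

lemma engel_digit_branch:
  assumes "y \<in> branch n"
  shows "engel_digit y = real (branch_digit n)"
proof -
  have y: "real n < 1 / y" "1 / y < real n + 1" using assms unfolding mem_branch_iff by auto
  show ?thesis
  proof (cases "odd n")
    case True
    then obtain k where k: "n = 2 * k + 1" by (metis oddE)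
    have "\<lceil>(1 / y - 1) / 2\<rceil> = int k + 1" using y unfolding k by (subst ceiling_eq_iff) auto
    then show ?thesis unfolding engel_digit_def branch_digit_def using True k by simp
  next
    case False
    then obtain k where k: "n = 2 * k" by (metis evenE)
    have "\<lceil>(1 / y - 1) / 2\<rceil> = int k" using y unfolding k by (subst ceiling_eq_iff) auto
    then show ?thesis unfolding engel_digit_def branch_digit_def using False k by simp
  qed
qed

lemma engel_shift_branch:
  assumes "y \<in> branch n"
  shows "engel_shift y = branch_map n y"
proof -
  have y: "0 < y" "real n < 1 / y" "1 / y < real n + 1" using assms unfolding mem_branch_iff by auto
  have "odd n \<longleftrightarrow> 1 < real (branch_digit n) * y"
    using y unfolding branch_digit_def by (auto simp: field_simps)
  then show ?thesis
    unfolding engel_shift_def branch_map_def engel_digit_branch[OF assms] by auto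
qed

lemma branch_map_mem_image_iff:
  assumes "n \<ge> 1"
  shows "branch_map n y \<in> {0<..<1 / real (branch_image_den n)} \<longleftrightarrow> y \<in> branch n"
proof (cases "odd n")
  case True
  have map: "branch_map n y = (real n + 1) * y - 1" and den: "real (branch_image_den n) = real n"
    using True unfolding branch_map_def branch_digit_def branch_image_den_def by simp_all
  have "0 < (real n + 1) * y - 1 \<longleftrightarrow> 1 / (real n + 1) < y"
    by (simp add: field_simps)
  moreover have "(real n + 1) * y - 1 < 1 / real n \<longleftrightarrow> y < 1 / real n"
  proof -
    have "(real n + 1) * y - 1 < 1 / real n \<longleftrightarrow> (real n + 1) * (real n * y) < (real n + 1) * 1"
      using assms by (simp add: field_simps)
    also have "\<dots> \<longleftrightarrow> real n * y < 1" by simp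
    also have "\<dots> \<longleftrightarrow> y < 1 / real n" using assms by (simp add: field_simps)
    finally show ?thesis .
  qed
  ultimately show ?thesis unfolding map den branch_def by auto
next
  case False
  have map: "branch_map n y = 1 - real n * y" and den: "real (branch_image_den n) = real n + 1"
    using False unfolding branch_map_def branch_digit_def branch_image_den_def by simp_all
  have "0 < 1 - real n * y \<longleftrightarrow> y < 1 / real n"
    using assms by (simp add: field_simps)
  moreover have "1 - real n * y < 1 / (real n + 1) \<longleftrightarrow> 1 / (real n + 1) < y"
  proof -
    have "1 - real n * y < 1 / (real n + 1) \<longleftrightarrow> real n * 1 < real n * ((real n + 1) * y)"
      by (simp add: field_simps)
    also have "\<dots> \<longleftrightarrow> 1 < (real n + 1) * y" using assms by simp
    also have "\<dots> \<longleftrightarrow> 1 / (real n + 1) < y" by (simp add: field_simps)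
    finally show ?thesis .
  qed
  ultimately show ?thesis unfolding map den branch_def by auto
qed

section \<open>A renewal inequality for Lebesgue measure\<close>

lemma emeasure_branch:
  assumes "n \<ge> 1"
  shows "emeasure lborel (branch n) = ennreal (1 / (real (branch_digit n) * real (branch_image_den n)))"
proof -
  have "1 / real n - 1 / (real n + 1) = 1 / (real n * (real n + 1))"
    using assms by (simp add: field_simps)
  moreover have "1 / (real n + 1) \<le> 1 / real n"
    using assms by (simp add: frac_le)
  ultimately show ?thesis
    unfolding branch_def of_nat_mult[symmetric] branch_digit_mult_image_den
    by (simp add: algebra_simps)
qed

lemma emeasure_lborel_vimage_affine:
  fixes c t :: real
  assumes "c \<noteq> 0" "S \<in> sets borel"
  shows "emeasure lborel S = ennreal \<bar>c\<bar> * emeasure lborel ((\<lambda>x. t + c * x) -` S)"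
proof -
  have vimage: "(\<lambda>x. t + c * x) -` S \<in> sets borel"
    by (rule measurable_sets_borel[OF _ assms(2)]) measurable
  have "emeasure lborel S = (\<integral>\<^sup>+x. indicator S x \<partial>lborel)"
    using assms(2) by simp
  also have "\<dots> = ennreal \<bar>c\<bar> * (\<integral>\<^sup>+x. indicator S (t + c * x) \<partial>lborel)"
    using assms by (intro nn_integral_real_affine) auto
  also have "(\<lambda>x. indicator S (t + c * x) :: ennreal) = indicator ((\<lambda>x. t + c * x) -` S)"
    by (auto simp: indicator_def)
  also have "(\<integral>\<^sup>+x. indicator ((\<lambda>x. t + c * x) -` S) x \<partial>lborel) = emeasure lborel ((\<lambda>x. t + c * x) -` S)"
    using vimage by simp
  finally show ?thesis .
qed

lemma emeasure_branch_shift_vimage: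
  assumes n: "n \<ge> 1" and G: "G \<in> sets borel"
  shows "ennreal (real (branch_digit n)) * emeasure lborel {y \<in> branch n. engel_shift y \<in> G}
    = emeasure lborel (G \<inter> {0<..<1 / real (branch_image_den n)})"
proof -
  define d where "d = real (branch_digit n)"
  define c where "c = (if odd n then d else - d)"
  define t :: real where "t = (if odd n then - 1 else 1)"
  have map: "branch_map n = (\<lambda>y. t + c * y)"
    unfolding branch_map_def c_def t_def d_def by auto
  have c: "c \<noteq> 0" "\<bar>c\<bar> = d"
    using branch_digit_ge_two[OF n] unfolding c_def d_def by auto
  have "{y \<in> branch n. engel_shift y \<in> G} = branch_map n -` (G \<inter> {0<..<1 / real (branch_image_den n)})"
    using engel_shift_branch branch_map_mem_image_iff[OF n] by auto
  then show ?thesis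
    using emeasure_lborel_vimage_affine[OF c(1), of "G \<inter> {0<..<1 / real (branch_image_den n)}" t] G
    unfolding map c(2) d_def by simp
qed

lemma emeasure_branch_shift_le:
  assumes n: "n \<ge> 1" and G: "G \<in> sets borel" and p: "p \<ge> 0"
    and le: "emeasure lborel (G \<inter> {0<..<1 / real (branch_image_den n)})
      \<le> ennreal (p / real (branch_image_den n))"
  shows "emeasure lborel {y \<in> branch n. engel_shift y \<in> G} \<le> ennreal p * emeasure lborel (branch n)"
proof -
  define d where "d = real (branch_digit n)"
  define k where "k = real (branch_image_den n)"
  have d: "d > 0" using branch_digit_ge_two[OF n] unfolding d_def by simp
  have k: "k > 0" using branch_image_den_ge_one[OF n] unfolding k_def by simp
  let ?X = "{y \<in> branch n. engel_shift y \<in> G}"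
  have "emeasure lborel ?X = ennreal (1 / d) * (ennreal d * emeasure lborel ?X)"
    using d by (simp add: mult.assoc[symmetric] ennreal_mult'[symmetric])
  also have "\<dots> \<le> ennreal (1 / d) * ennreal (p / k)"
    using emeasure_branch_shift_vimage[OF n G] le unfolding d_def k_def
    by (intro mult_left_mono) auto
  also have "\<dots> = ennreal p * ennreal (1 / (d * k))"
    using d k p by (simp add: ennreal_mult'[symmetric] field_simps)
  also have "\<dots> = ennreal p * emeasure lborel (branch n)"
    unfolding emeasure_branch[OF n] d_def k_def ..
  finally show ?thesis .
qed

lemma measurable_funpow: "f \<in> measurable M M \<Longrightarrow> f ^^ n \<in> measurable M M"
  by (induction n) (auto simp del: funpow.simps simp: funpow_Suc_right)

lemma sets_Collect_dependent_countable:
  assumes "countable (f ` space M)" "\<And>e. f -` {e} \<inter> space M \<in> sets M"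
    and "g \<in> measurable M N" "\<And>e. F e \<in> sets N"
  shows "{x \<in> space M. g x \<in> F (f x)} \<in> sets M"
proof -
  have "{x \<in> space M. g x \<in> F (f x)} = (\<Union>e\<in>f ` space M. (f -` {e} \<inter> space M) \<inter> (g -` F e \<inter> space M))"
    by auto
  also have "\<dots> \<in> sets M"
    using assms by (intro sets.countable_UN'') (auto intro: measurable_sets)
  finally show ?thesis .
qed

lemma engel_digit_measurable [measurable]: "engel_digit \<in> borel_measurable borel"
  unfolding engel_digit_def by measurable

lemma engel_shift_measurable [measurable]: "engel_shift \<in> borel_measurable borel"
  unfolding engel_shift_def by measurable

lemma engel_shift_funpow_measurable [measurable]: "engel_shift ^^ n \<in> borel_measurable borel"
  by (rule measurable_funpow) (rule engel_shift_measurable)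

lemma countable_range_engel_digit: "countable (range engel_digit)"
proof -
  have "range engel_digit \<subseteq> (\<lambda>k. 2 * of_int k) ` UNIV"
    unfolding engel_digit_def by auto
  then show ?thesis by (rule countable_subset) simp
qed

lemma sets_engel_shift_dependent:
  assumes "\<And>e. F e \<in> sets borel"
  shows "{y. engel_shift y \<in> F (engel_digit y)} \<in> sets borel"
proof -
  have "engel_digit -` {e} \<in> sets borel" for e
    by (rule measurable_sets_borel[OF engel_digit_measurable]) simp
  then show ?thesis
    using sets_Collect_dependent_countable[of engel_digit borel engel_shift borel F]
      countable_range_engel_digit assms by simp
qed

lemma branch_subset_Ioo:
  assumes "1 \<le> j" "j \<le> n"
  shows "branch n \<subseteq> {0<..<1 / real j}"
proof
  fix y assume "y \<in> branch n"
  then have "0 < 1 / (real n + 1)" "1 / (real n + 1) < y" "y < 1 / real n"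
    unfolding branch_def by auto
  moreover have "1 / real n \<le> 1 / real j"
    using assms by (simp add: frac_le)
  ultimately show "y \<in> {0<..<1 / real j}"
    unfolding greaterThanLessThan_iff by linarith
qed

lemma Ioo_subset_Union_branch:
  assumes j: "j \<ge> 1"
  shows "{0<..<1 / real j} \<subseteq> (\<Union>i. branch (i + j)) \<union> range (\<lambda>n. 1 / real n)"
proof
  fix y assume y: "y \<in> {0<..<1 / real j}"
  show "y \<in> (\<Union>i. branch (i + j)) \<union> range (\<lambda>n. 1 / real n)"
  proof (cases "y \<in> range (\<lambda>n. 1 / real n)")
    case False
    have "1 / real j \<le> 1" using j by simp
    then obtain n where n: "y \<in> branch n" using ex_mem_branch[OF _ _ False] y by auto
    have "real j < 1 / y" using y j by (auto simp: field_simps)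
    also have "1 / y < real n + 1" using n unfolding mem_branch_iff by simp
    finally have "y \<in> branch (n - j + j)" using n by simp
    then show ?thesis by blast
  qed simp
qed

lemma emeasure_Int_Ioo_eq_suminf_branch:
  assumes j: "j \<ge> 1" and Z: "Z \<in> sets borel"
  shows "emeasure lborel (Z \<inter> {0<..<1 / real j}) = (\<Sum>i. emeasure lborel (Z \<inter> branch (i + j)))"
proof -
  define C where "C = Z \<inter> {0<..<1 / real j} \<inter> range (\<lambda>n. 1 / real n)"
  have null: "C \<in> null_sets lborel"
    unfolding C_def
    by (rule countable_imp_null_set_lborel, rule countable_subset[of _ "range (\<lambda>n. 1 / real n)"]) auto
  have eq: "Z \<inter> {0<..<1 / real j} = (\<Union>i. Z \<inter> branch (i + j)) \<union> C"
    using Ioo_subset_Union_branch[OF j] branch_subset_Ioo[OF j le_add2] unfolding C_def by blast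
  have sets: "range (\<lambda>i. Z \<inter> branch (i + j)) \<subseteq> sets lborel"
    using Z unfolding branch_def by auto
  have "disjoint_family (\<lambda>i. Z \<inter> branch (i + j))"
    unfolding disjoint_family_on_def
  proof (intro ballI impI)
    fix a b :: nat assume "a \<noteq> b"
    then have "branch (a + j) \<inter> branch (b + j) = {}"
      using disjoint_family_branch unfolding disjoint_family_on_def by simp
    then show "Z \<inter> branch (a + j) \<inter> (Z \<inter> branch (b + j)) = {}" by blast
  qed
  then have "(\<Sum>i. emeasure lborel (Z \<inter> branch (i + j))) = emeasure lborel (\<Union>i. Z \<inter> branch (i + j))"
    by (rule suminf_emeasure[OF sets])
  also have "\<dots> = emeasure lborel (Z \<inter> {0<..<1 / real j})"
    unfolding eq using sets.countable_UN[OF sets] null by (rule emeasure_Un_null_set[symmetric])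
  finally show ?thesis ..
qed

(* The renewal inequality. Since engel_shift maps each branch onto an interval of the same shape
   {0<..<1 / j}, it can be iterated along the orbit by induction. *)
lemma emeasure_digit_shift_le:
  assumes j: "j \<ge> 1" and p: "p \<ge> 0" and A: "A \<in> sets borel" and F: "\<And>e. F e \<in> sets borel"
    and le: "\<And>n. n \<ge> 1 \<Longrightarrow> real (branch_digit n) \<in> A \<Longrightarrow>
      emeasure lborel (F (real (branch_digit n)) \<inter> {0<..<1 / real (branch_image_den n)})
        \<le> ennreal (p / real (branch_image_den n))"
  shows "emeasure lborel {y \<in> {0<..<1 / real j}. engel_digit y \<in> A \<and> engel_shift y \<in> F (engel_digit y)}
    \<le> ennreal p * emeasure lborel {y \<in> {0<..<1 / real j}. engel_digit y \<in> A}"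
proof -
  define X where "X = {y. engel_digit y \<in> A \<and> engel_shift y \<in> F (engel_digit y)}"
  define Y where "Y = {y. engel_digit y \<in> A}"
  have Y: "Y \<in> sets borel"
    unfolding Y_def using A by measurable
  have "X = Y \<inter> {y. engel_shift y \<in> F (engel_digit y)}"
    unfolding X_def Y_def by auto
  then have X: "X \<in> sets borel"
    using Y sets_engel_shift_dependent[OF F] by simp
  have branchwise: "emeasure lborel (X \<inter> branch n) \<le> ennreal p * emeasure lborel (Y \<inter> branch n)"
    if n: "n \<ge> 1" for n
  proof (cases "real (branch_digit n) \<in> A")
    case True
    then have "X \<inter> branch n = {y \<in> branch n. engel_shift y \<in> F (real (branch_digit n))}"
      and "Y \<inter> branch n = branch n"
      using engel_digit_branch unfolding X_def Y_def by auto
    then show ?thesis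
      using emeasure_branch_shift_le[OF n F p le[OF n True]] by simp
  next
    case False
    then have "X \<inter> branch n = {}"
      using engel_digit_branch unfolding X_def by auto
    then show ?thesis by simp
  qed
  have eqX: "{y \<in> {0<..<1 / real j}. engel_digit y \<in> A \<and> engel_shift y \<in> F (engel_digit y)}
      = X \<inter> {0<..<1 / real j}"
    and eqY: "{y \<in> {0<..<1 / real j}. engel_digit y \<in> A} = Y \<inter> {0<..<1 / real j}"
    unfolding X_def Y_def by auto
  have "emeasure lborel (X \<inter> {0<..<1 / real j}) = (\<Sum>i. emeasure lborel (X \<inter> branch (i + j)))"
    by (rule emeasure_Int_Ioo_eq_suminf_branch[OF j X])
  also have "\<dots> \<le> (\<Sum>i. ennreal p * emeasure lborel (Y \<inter> branch (i + j)))"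
    using branchwise j by (intro suminf_le) auto
  also have "\<dots> = ennreal p * emeasure lborel (Y \<inter> {0<..<1 / real j})"
    unfolding ennreal_suminf_cmult emeasure_Int_Ioo_eq_suminf_branch[OF j Y] ..
  finally show ?thesis unfolding eqX eqY .
qed

lemma emeasure_shift_le:
  assumes j: "j \<ge> 1" and p: "p \<ge> 0" and F: "\<And>e. F e \<in> sets borel"
    and le: "\<And>n. n \<ge> 1 \<Longrightarrow>
      emeasure lborel (F (real (branch_digit n)) \<inter> {0<..<1 / real (branch_image_den n)})
        \<le> ennreal (p / real (branch_image_den n))"
  shows "emeasure lborel {y \<in> {0<..<1 / real j}. engel_shift y \<in> F (engel_digit y)} \<le> ennreal (p / real j)"
proof -
  have "emeasure lborel {y \<in> {0<..<1 / real j}. engel_digit y \<in> UNIV \<and> engel_shift y \<in> F (engel_digit y)}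
      \<le> ennreal p * emeasure lborel {y \<in> {0<..<1 / real j}. engel_digit y \<in> UNIV}"
    using le by (intro emeasure_digit_shift_le[OF j p _ F]) auto
  also have "{y \<in> {0<..<1 / real j}. engel_digit y \<in> UNIV} = {0<..<1 / real j}"
    by auto
  also have "ennreal p * emeasure lborel {0<..<1 / real j} = ennreal (p / real j)"
    using p by (simp add: ennreal_mult'[symmetric])
  finally show ?thesis by simp
qed

section \<open>Tail bounds for the digit ratios\<close>

lemma engel_digit_bounds: "1 / y - 1 \<le> engel_digit y" "engel_digit y < 1 / y + 1"
proof -
  have "u \<le> 2 * of_int \<lceil>u / 2\<rceil>" "2 * of_int \<lceil>u / 2\<rceil> < u + 2" for u :: real
    by linarith+
  from this[of "1 / y - 1"] show "1 / y - 1 \<le> engel_digit y" "engel_digit y < 1 / y + 1"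
    unfolding engel_digit_def by simp_all
qed

lemma engel_digit_ge_two:
  assumes "0 < y" "y < 1"
  shows "2 \<le> engel_digit y"
proof -
  have "0 < (1 / y - 1) / 2" using assms by simp
  then have "1 \<le> \<lceil>(1 / y - 1) / 2\<rceil>" by linarith
  then show ?thesis unfolding engel_digit_def by simp
qed

lemma emeasure_digit_gt_le:
  assumes s: "s > 1"
  shows "emeasure lborel {y \<in> {0<..<b}. s < engel_digit y} \<le> ennreal (1 / (s - 1))"
proof -
  have "{y \<in> {0<..<b}. s < engel_digit y} \<subseteq> {0<..<1 / (s - 1)}"
  proof
    fix y assume y: "y \<in> {y \<in> {0<..<b}. s < engel_digit y}"
    then have "s - 1 < 1 / y" using engel_digit_bounds(2)[of y] by auto
    then show "y \<in> {0<..<1 / (s - 1)}" using y s by (auto simp: field_simps)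
  qed
  then have "emeasure lborel {y \<in> {0<..<b}. s < engel_digit y} \<le> emeasure lborel {0<..<1 / (s - 1)}"
    by (rule emeasure_mono) simp
  also have "\<dots> = ennreal (1 / (s - 1))" using s by simp
  finally show ?thesis .
qed

definition ratio_exceeds :: "real \<Rightarrow> real set" where
  "ratio_exceeds t = {y. t * engel_digit y < engel_digit (engel_shift y)}"

lemma sets_ratio_exceeds [measurable]: "ratio_exceeds t \<in> sets borel"
  unfolding ratio_exceeds_def by measurable

lemma emeasure_branch_digit_gt_le:
  assumes t: "t \<ge> 1" and n: "n \<ge> 1"
  shows "emeasure lborel ({z. t * real (branch_digit n) < engel_digit z} \<inter> {0<..<1 / real (branch_image_den n)})
    \<le> ennreal (3 / t / real (branch_image_den n))"
proof -
  define d where "d = real (branch_digit n)"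
  define k where "k = real (branch_image_den n)"
  have d: "d \<ge> 2" "k \<le> d + 1" "k \<ge> 1"
    using branch_digit_ge_two[OF n] branch_image_den_bounds(2)[of n] branch_image_den_ge_one[OF n]
    unfolding d_def k_def by linarith+
  have "1 * 2 \<le> t * d" using d t by (intro mult_mono) auto
  then have td: "t * d > 1" by linarith
  have "emeasure lborel ({z. t * d < engel_digit z} \<inter> {0<..<1 / k})
      = emeasure lborel {z \<in> {0<..<1 / k}. t * d < engel_digit z}"
    by (rule arg_cong[where f = "emeasure lborel"]) auto
  also have "\<dots> \<le> ennreal (1 / (t * d - 1))"
    by (rule emeasure_digit_gt_le[OF td])
  also have "\<dots> \<le> ennreal (3 / t / k)"
  proof (rule ennreal_leI)
    have "t * k \<le> t * (d + 1)" "t * 2 \<le> t * d"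
      using d t by (intro mult_left_mono; simp)+
    moreover have "t * (d + 1) = t * d + t" by (simp add: algebra_simps)
    moreover have "3 * (t * d - 1) = 3 * (t * d) - 3" by simp
    ultimately have "t * k \<le> 3 * (t * d - 1)"
      using t by linarith
    then show "1 / (t * d - 1) \<le> 3 / t / k"
      using td t d by (simp add: field_simps)
  qed
  finally show ?thesis unfolding d_def k_def .
qed

lemma emeasure_shift_funpow_ratio_exceeds_le:
  assumes t: "t \<ge> 1" and j: "j \<ge> 1"
  shows "emeasure lborel {y \<in> {0<..<1 / real j}. (engel_shift ^^ m) y \<in> ratio_exceeds t}
    \<le> ennreal (3 / t / real j)"
  using j
proof (induction m arbitrary: j)
  case 0
  have "emeasure lborel {y \<in> {0<..<1 / real j}. engel_shift y \<in> {z. t * engel_digit y < engel_digit z}}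
      \<le> ennreal (3 / t / real j)"
    by (rule emeasure_shift_le[OF 0]) (use t emeasure_branch_digit_gt_le in auto)
  then show ?case unfolding ratio_exceeds_def by simp
next
  case (Suc m)
  have "emeasure lborel {y \<in> {0<..<1 / real j}. engel_shift y \<in> {z. (engel_shift ^^ m) z \<in> ratio_exceeds t}}
      \<le> ennreal (3 / t / real j)"
  proof (rule emeasure_shift_le[OF Suc.prems])
    fix n :: nat assume n: "n \<ge> 1"
    show "emeasure lborel ({z. (engel_shift ^^ m) z \<in> ratio_exceeds t} \<inter> {0<..<1 / real (branch_image_den n)})
        \<le> ennreal (3 / t / real (branch_image_den n))"
      using Suc.IH[OF branch_image_den_ge_one[OF n]] by (simp add: Int_commute Int_def)
  qed (use t in auto)
  then show ?case by (simp add: funpow_Suc_right del: funpow.simps)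
qed

(* y \<in> ratios_below m k d: after a previous digit d, each of the first k digits of y is less than
   m times its predecessor. *)
primrec ratios_below :: "real \<Rightarrow> nat \<Rightarrow> real \<Rightarrow> real set" where
  "ratios_below m 0 d = UNIV"
| "ratios_below m (Suc k) d =
     {y. engel_digit y < m * d \<and> engel_shift y \<in> ratios_below m k (engel_digit y)}"

lemma sets_ratios_below [measurable]: "ratios_below m k d \<in> sets borel"
proof (induction k arbitrary: d)
  case (Suc k)
  have "ratios_below m (Suc k) d
      = {y. engel_digit y < m * d} \<inter> {y. engel_shift y \<in> ratios_below m k (engel_digit y)}"
    by auto
  also have "\<dots> \<in> sets borel"
    using sets_engel_shift_dependent[OF Suc.IH] by measurable
  finally show ?case .
qed simp

lemma shift_mem_ratios_below:
  assumes "\<forall>i<k. engel_digit ((engel_shift ^^ Suc i) x) < m * engel_digit ((engel_shift ^^ i) x)"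
  shows "engel_shift x \<in> ratios_below m k (engel_digit x)"
  using assms
proof (induction k arbitrary: x)
  case (Suc k)
  have "\<forall>i<k. engel_digit ((engel_shift ^^ Suc i) (engel_shift x))
      < m * engel_digit ((engel_shift ^^ i) (engel_shift x))"
    using Suc.prems by (auto simp: funpow_Suc_right simp del: funpow.simps)
  then show ?case
    using Suc.IH Suc.prems[rule_format, of 0] by simp
qed simp

lemma emeasure_digit_lt_le:
  assumes m: "m \<ge> 1" and n: "n \<ge> 1"
  shows "emeasure lborel {y \<in> {0<..<1 / real (branch_image_den n)}. engel_digit y < m * real (branch_digit n)}
    \<le> ennreal ((1 - 1 / (3 * m)) / real (branch_image_den n))"
proof -
  define d where "d = real (branch_digit n)"
  define k where "k = real (branch_image_den n)"
  have d: "d \<ge> 2" "d - 1 \<le> k" "k \<le> d + 1" "k \<ge> 1"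
    using branch_digit_ge_two[OF n] branch_image_den_bounds[of n] branch_image_den_ge_one[OF n]
    unfolding d_def k_def by linarith+
  have md: "m * d \<ge> d" using m d by simp
  have md1: "0 < m * d + 1" using md d by linarith
  have "{y \<in> {0<..<1 / k}. engel_digit y < m * d} \<subseteq> {1 / (m * d + 1)<..<1 / k}"
  proof
    fix y assume y: "y \<in> {y \<in> {0<..<1 / k}. engel_digit y < m * d}"
    then have "1 / y < m * d + 1" using engel_digit_bounds(1)[of y] by auto
    then show "y \<in> {1 / (m * d + 1)<..<1 / k}" using y md1 by (auto simp: field_simps)
  qed
  then have "emeasure lborel {y \<in> {0<..<1 / k}. engel_digit y < m * d}
      \<le> emeasure lborel {1 / (m * d + 1)<..<1 / k}"
    by (rule emeasure_mono) simp
  also have "\<dots> = ennreal (1 / k - 1 / (m * d + 1))"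
  proof -
    have "k \<le> m * d + 1" using md d by linarith
    then have "1 / (m * d + 1) \<le> 1 / k" using d by (intro divide_left_mono) auto
    then show ?thesis by simp
  qed
  also have "\<dots> \<le> ennreal ((1 - 1 / (3 * m)) / k)"
  proof (rule ennreal_leI)
    have "m * (2 * d - 3) \<ge> 1 * 1" using m d by (intro mult_mono) auto
    moreover have "3 * m * k \<ge> 3 * m * (d - 1)" using m d by simp
    ultimately have "m * d + 1 \<le> 3 * m * k" by (simp add: algebra_simps)
    moreover have "0 < (3 * m * k) * (m * d + 1)"
      using m d md1 by (intro mult_pos_pos) auto
    ultimately have "1 / (3 * m * k) \<le> 1 / (m * d + 1)"
      by (intro divide_left_mono) auto
    moreover have "(1 - 1 / (3 * m)) / k = 1 / k - 1 / (3 * m * k)"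
      using m d by (simp add: field_simps)
    ultimately show "1 / k - 1 / (m * d + 1) \<le> (1 - 1 / (3 * m)) / k" by linarith
  qed
  finally show ?thesis unfolding d_def k_def .
qed

lemma emeasure_ratios_below_branch_le:
  assumes m: "m \<ge> 1" and n: "n \<ge> 1"
  shows "emeasure lborel (ratios_below m k (real (branch_digit n)) \<inter> {0<..<1 / real (branch_image_den n)})
    \<le> ennreal ((1 - 1 / (3 * m)) ^ k / real (branch_image_den n))"
  using n
proof (induction k arbitrary: n)
  case 0
  then show ?case by simp
next
  case (Suc k)
  define d where "d = real (branch_digit n)"
  define c where "c = real (branch_image_den n)"
  define q where "q = 1 - 1 / (3 * m)"
  have q: "0 \<le> q" using m unfolding q_def by (simp add: field_simps)
  have eq: "ratios_below m (Suc k) d \<inter> {0<..<1 / c}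
      = {y \<in> {0<..<1 / c}. engel_digit y \<in> {e. e < m * d} \<and> engel_shift y \<in> ratios_below m k (engel_digit y)}"
    by auto
  have "emeasure lborel {y \<in> {0<..<1 / c}. engel_digit y \<in> {e. e < m * d} \<and> engel_shift y \<in> ratios_below m k (engel_digit y)}
      \<le> ennreal (q ^ k) * emeasure lborel {y \<in> {0<..<1 / c}. engel_digit y \<in> {e. e < m * d}}"
    unfolding c_def using branch_image_den_ge_one[OF Suc.prems] q Suc.IH unfolding q_def
    by (intro emeasure_digit_shift_le) auto
  also have "\<dots> \<le> ennreal (q ^ k) * ennreal (q / c)"
    using emeasure_digit_lt_le[OF m Suc.prems] unfolding d_def c_def q_def
    by (intro mult_left_mono) auto
  also have "\<dots> = ennreal (q ^ k * (q / c))"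
    using q by (intro ennreal_mult'[symmetric]) simp
  also have "q ^ k * (q / c) = q ^ Suc k / c"
    by (simp only: power_Suc2 times_divide_eq_right)
  finally have "emeasure lborel (ratios_below m (Suc k) d \<inter> {0<..<1 / c}) \<le> ennreal (q ^ Suc k / c)"
    unfolding eq .
  then show ?case unfolding d_def c_def q_def .
qed

lemma emeasure_shift_ratios_below_le:
  assumes "m \<ge> 1"
  shows "emeasure lborel {y \<in> {0<..<1}. engel_shift y \<in> ratios_below m k (engel_digit y)}
    \<le> ennreal ((1 - 1 / (3 * m)) ^ k)"
proof -
  have "0 \<le> 1 - 1 / (3 * m)" using assms by (simp add: field_simps)
  then have "emeasure lborel {y \<in> {0<..<1 / real 1}. engel_shift y \<in> ratios_below m k (engel_digit y)}
      \<le> ennreal ((1 - 1 / (3 * m)) ^ k / real 1)"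
    using emeasure_ratios_below_branch_le[OF assms] by (intro emeasure_shift_le) auto
  then show ?thesis by simp
qed

section \<open>Orbits of irrational points\<close>

lemma sengel_d1_T_odd_branch:
  assumes y: "y \<in> branch n" and "odd n"
  shows "sengel_d1 y = real (branch_digit n) \<and> sengel_T y = branch_map n y"
proof -
  obtain k where k: "n = 2 * k + 1" using \<open>odd n\<close> by (metis oddE)
  have iy: "real n < 1 / y" "1 / y < real n + 1"
    using y unfolding mem_branch_iff by auto
  have c: "1 / (2 * real (k + 1)) < y \<and> y < 1 / (2 * real (k + 1) - 1)"
    using y unfolding k branch_def by (simp add: field_simps)
  have ce: "\<lceil>1 / y\<rceil> = 2 * int k + 2"
    using iy unfolding k by (subst ceiling_eq_iff) auto
  have "sengel_d1 y = 2 * real k + 2"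
    unfolding sengel_d1_def using c ce by (subst if_P) (auto intro!: exI[of _ "k + 1"])
  moreover have "sengel_T y = (2 * real k + 2) * y - 1"
    unfolding sengel_T_def using c ce by (subst if_P) (auto intro!: exI[of _ "k + 1"])
  ultimately show ?thesis
    using \<open>odd n\<close> unfolding branch_digit_def branch_map_def k by simp
qed

lemma sengel_d1_T_even_branch:
  assumes y: "y \<in> branch n" and "even n"
  shows "sengel_d1 y = real (branch_digit n) \<and> sengel_T y = branch_map n y"
proof -
  obtain k where k: "n = 2 * k" using \<open>even n\<close> by (metis evenE)
  have yp: "0 < y" and iy: "real n < 1 / y" "1 / y < real n + 1" and k1: "k \<ge> 1"
    using y unfolding mem_branch_iff k by auto
  have c: "1 / (2 * real k + 1) < y \<and> y < 1 / (2 * real k)"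
    using y unfolding k branch_def by (simp add: field_simps)
  have no_odd: "\<not> (\<exists>k'::nat. k' \<ge> 1 \<and> 1 / (2 * real k') \<le> y \<and> y < 1 / (2 * real k' - 1))"
  proof
    assume "\<exists>k'::nat. k' \<ge> 1 \<and> 1 / (2 * real k') \<le> y \<and> y < 1 / (2 * real k' - 1)"
    then obtain k' :: nat where "k' \<ge> 1" "1 / (2 * real k') \<le> y" "y < 1 / (2 * real k' - 1)"
      by blast
    then have "2 * real k' - 1 < 1 / y" "1 / y \<le> 2 * real k'"
      using yp by (auto simp: field_simps)
    then have "real k' < real k + 1" "real k < real k'"
      using iy unfolding k by auto
    then have "k' < k + 1" "k < k'"
      by (metis of_nat_1 of_nat_add of_nat_less_iff)+
    then show False by linarith
  qed
  then have no_odd': "\<not> (\<exists>k'::nat. k' \<ge> 1 \<and> 1 / (2 * real k') < y \<and> y < 1 / (2 * real k' - 1))"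
    by (meson less_imp_le)
  have fl: "\<lfloor>1 / y\<rfloor> = 2 * int k"
    using iy unfolding k by (subst floor_eq_iff) auto
  have "sengel_d1 y = 2 * real k"
    unfolding sengel_d1_def using c fl k1 no_odd
    by (subst if_not_P) (auto intro!: exI[of _ k])
  moreover have "sengel_T y = 1 - 2 * real k * y"
    unfolding sengel_T_def using c fl k1 no_odd'
    by (subst if_not_P) (auto intro!: exI[of _ k])
  ultimately show ?thesis
    using \<open>even n\<close> unfolding branch_digit_def branch_map_def k by simp
qed

lemma sengel_d1_T_branch:
  assumes y: "y \<in> branch n"
  shows "sengel_d1 y = engel_digit y" "sengel_T y = engel_shift y"
  using sengel_d1_T_odd_branch[OF y] sengel_d1_T_even_branch[OF y]
    engel_digit_branch[OF y] engel_shift_branch[OF y] by (cases "odd n"; simp)+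

lemma irrational_mem_branch:
  assumes "y \<in> {0<..<1} - \<rat>"
  obtains n where "y \<in> branch n"
proof -
  have "1 / real n \<in> \<rat>" for n :: nat by simp
  then have "y \<notin> range (\<lambda>n. 1 / real n)" using assms by auto
  then show ?thesis using ex_mem_branch assms that by auto
qed

lemma engel_shift_mem_irrationals:
  assumes y: "y \<in> {0<..<1} - \<rat>"
  shows "engel_shift y \<in> {0<..<1} - \<rat>"
proof -
  obtain n where yn: "y \<in> branch n" using irrational_mem_branch[OF y] .
  then have n: "n \<ge> 1" unfolding mem_branch_iff by simp
  have "branch_map n y \<in> {0<..<1 / real (branch_image_den n)}"
    using branch_map_mem_image_iff[OF n] yn by simp
  moreover have "1 / real (branch_image_den n) \<le> 1"
    using branch_image_den_ge_one[OF n] by simp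
  ultimately have "engel_shift y \<in> {0<..<1}"
    unfolding engel_shift_branch[OF yn] by auto
  moreover have "engel_shift y \<notin> \<rat>"
  proof
    assume "engel_shift y \<in> \<rat>"
    then have "branch_map n y \<in> \<rat>" unfolding engel_shift_branch[OF yn] .
    moreover have "real (branch_digit n) * y
        = (if odd n then branch_map n y + 1 else 1 - branch_map n y)"
      unfolding branch_map_def by simp
    ultimately have "real (branch_digit n) * y \<in> \<rat>"
      by (cases "odd n") (simp_all add: Rats_add Rats_diff)
    then have "real (branch_digit n) * y / real (branch_digit n) \<in> \<rat>"
      by (intro Rats_divide) auto
    then show False
      using y branch_digit_ge_two[OF n] by simp
  qed
  ultimately show ?thesis by simp
qed

lemma engel_shift_funpow_mem_irrationals:
  assumes "x \<in> {0<..<1} - \<rat>"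
  shows "(engel_shift ^^ k) x \<in> {0<..<1} - \<rat>"
proof (induction k)
  case (Suc k)
  then show ?case using engel_shift_mem_irrationals[OF Suc.IH] by simp
qed (use assms in simp)

lemma sengel_T_funpow:
  assumes "x \<in> {0<..<1} - \<rat>"
  shows "(sengel_T ^^ k) x = (engel_shift ^^ k) x"
proof (induction k)
  case (Suc k)
  obtain n where "(engel_shift ^^ k) x \<in> branch n"
    using irrational_mem_branch engel_shift_funpow_mem_irrationals[OF assms] by blast
  then show ?case
    using Suc.IH sengel_d1_T_branch(2) by simp
qed simp

lemma sengel_d_Suc:
  assumes "x \<in> {0<..<1} - \<rat>"
  shows "sengel_d (Suc k) x = engel_digit ((engel_shift ^^ k) x)"
proof -
  obtain n where "(engel_shift ^^ k) x \<in> branch n"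
    using irrational_mem_branch engel_shift_funpow_mem_irrationals[OF assms] by blast
  then show ?thesis
    unfolding sengel_d_def using sengel_T_funpow[OF assms] sengel_d1_T_branch(1) by simp
qed

lemma engel_digit_funpow_ge_two:
  "x \<in> {0<..<1} - \<rat> \<Longrightarrow> 2 \<le> engel_digit ((engel_shift ^^ k) x)"
  using engel_shift_funpow_mem_irrationals[of x k] engel_digit_ge_two by auto

lemma sengel_R_one: "x \<in> {0<..<1} - \<rat> \<Longrightarrow> sengel_R 1 x = engel_digit x"
  unfolding sengel_R_def using sengel_d_Suc[of x 0] by simp

lemma sengel_R_Suc_Suc:
  "x \<in> {0<..<1} - \<rat> \<Longrightarrow>
    sengel_R (Suc (Suc k)) x = engel_digit ((engel_shift ^^ Suc k) x) / engel_digit ((engel_shift ^^ k) x)"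
  unfolding sengel_R_def using sengel_d_Suc[of x k] sengel_d_Suc[of x "Suc k"] by simp

lemma sengel_R_pos:
  assumes x: "x \<in> {0<..<1} - \<rat>"
  shows "0 < sengel_R n x"
proof (cases "n \<le> 1")
  case True
  then show ?thesis
    using sengel_d_Suc[OF x, of 0] engel_digit_funpow_ge_two[OF x, of 0] unfolding sengel_R_def by simp
next
  case False
  define k where "k = n - 2"
  have "n = Suc (Suc k)" using False unfolding k_def by simp
  moreover have "0 < engel_digit ((engel_shift ^^ Suc k) x) / engel_digit ((engel_shift ^^ k) x)"
    using engel_digit_funpow_ge_two[OF x, of k] engel_digit_funpow_ge_two[OF x, of "Suc k"]
    by (intro divide_pos_pos) linarith+
  ultimately show ?thesis
    using sengel_R_Suc_Suc[OF x, of k] by simp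
qed

lemma sengel_R_le_sengel_M: "1 \<le> k \<Longrightarrow> k \<le> n \<Longrightarrow> sengel_R k x \<le> sengel_M n x"
  unfolding sengel_M_def by (intro Max_ge) auto

lemma sengel_M_le: "1 \<le> n \<Longrightarrow> (\<And>k. 1 \<le> k \<Longrightarrow> k \<le> n \<Longrightarrow> sengel_R k x \<le> t) \<Longrightarrow> sengel_M n x \<le> t"
  unfolding sengel_M_def by (intro Max.boundedI) auto

lemma sengel_M_mono: "1 \<le> m \<Longrightarrow> m \<le> n \<Longrightarrow> sengel_M m x \<le> sengel_M n x"
  unfolding sengel_M_def by (intro Max_mono) auto

lemma sengel_M_pos: "x \<in> {0<..<1} - \<rat> \<Longrightarrow> 1 \<le> n \<Longrightarrow> 0 < sengel_M n x"
  using sengel_R_pos sengel_R_le_sengel_M[OF order.refl] by (rule less_le_trans)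

lemma sengel_R_Suc_Suc_le_iff:
  assumes "x \<in> {0<..<1} - \<rat>"
  shows "sengel_R (Suc (Suc k)) x \<le> t \<longleftrightarrow> (engel_shift ^^ k) x \<notin> ratio_exceeds t"
  using engel_digit_funpow_ge_two[OF assms, of k]
  unfolding sengel_R_Suc_Suc[OF assms] ratio_exceeds_def by (simp add: divide_le_eq not_less)

lemma le_sengel_R_Suc_Suc_iff:
  assumes "x \<in> {0<..<1} - \<rat>"
  shows "t \<le> sengel_R (Suc (Suc k)) x
    \<longleftrightarrow> t * engel_digit ((engel_shift ^^ k) x) \<le> engel_digit ((engel_shift ^^ Suc k) x)"
  using engel_digit_funpow_ge_two[OF assms, of k]
  unfolding sengel_R_Suc_Suc[OF assms] by (simp add: le_divide_eq)

lemma sengel_M_le_of_not_ratio_exceeds: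
  assumes x: "x \<in> {0<..<1} - \<rat>" and n: "1 \<le> n" and first: "engel_digit x \<le> t"
    and ratios: "\<And>k. k + 2 \<le> n \<Longrightarrow> (engel_shift ^^ k) x \<notin> ratio_exceeds t"
  shows "sengel_M n x \<le> t"
proof (rule sengel_M_le[OF n])
  fix k assume k: "1 \<le> k" "k \<le> n"
  show "sengel_R k x \<le> t"
  proof (cases "k = 1")
    case True
    then show ?thesis using first sengel_R_one[OF x] by simp
  next
    case False
    define i where "i = k - 2"
    have "k = Suc (Suc i)" using k False unfolding i_def by simp
    then show ?thesis
      using ratios[of i] k sengel_R_Suc_Suc_le_iff[OF x] by simp
  qed
qed

lemma le_sengel_M_of_not_ratios_below:
  assumes x: "x \<in> {0<..<1} - \<rat>" and n: "1 \<le> n"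
    and not_below: "engel_shift x \<notin> ratios_below m (n - 1) (engel_digit x)"
  shows "m \<le> sengel_M n x"
proof -
  obtain k where k: "k < n - 1"
    and ratio: "\<not> engel_digit ((engel_shift ^^ Suc k) x) < m * engel_digit ((engel_shift ^^ k) x)"
    using shift_mem_ratios_below not_below by blast
  have "m \<le> sengel_R (Suc (Suc k)) x"
    using ratio unfolding le_sengel_R_Suc_Suc_iff[OF x] by simp
  also have "\<dots> \<le> sengel_M n x"
    using k by (intro sengel_R_le_sengel_M) auto
  finally show ?thesis .
qed

section \<open>Borel-Cantelli arguments and logarithmic scales\<close>

lemma AE_frequently_not_in:
  assumes sets: "\<And>k. B k \<in> sets M"
    and le: "\<forall>\<^sub>F k in sequentially. emeasure M (B k) \<le> ennreal (b k)"
    and b: "b \<longlonglongrightarrow> 0"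
  shows "AE x in M. \<exists>\<^sub>F k in sequentially. x \<notin> B k"
proof -
  have null: "(\<Inter>k\<in>{N..}. B k) \<in> null_sets M" for N
  proof -
    have "emeasure M (\<Inter>k\<in>{N..}. B k) \<le> 0"
    proof (rule tendsto_le[OF sequentially_bot])
      show "(\<lambda>k. ennreal (b k)) \<longlonglongrightarrow> 0"
        using tendsto_ennrealI[OF b] by simp
      show "eventually (\<lambda>k. emeasure M (\<Inter>k\<in>{N..}. B k) \<le> ennreal (b k)) sequentially"
        using le eventually_ge_at_top[of N]
      proof eventually_elim
        case (elim i)
        have "emeasure M (\<Inter>k\<in>{N..}. B k) \<le> emeasure M (B i)"
          using elim sets by (intro emeasure_mono) auto
        then show ?case using elim by simp
      qed
    qed simp
    moreover have "(\<Inter>k\<in>{N..}. B k) \<in> sets M"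
      using sets by (intro sets.countable_INT) auto
    ultimately show ?thesis by (simp add: null_sets_def)
  qed
  show ?thesis
  proof (rule AE_I')
    show "(\<Union>N. \<Inter>k\<in>{N..}. B k) \<in> null_sets M" using null by blast
    show "{x \<in> space M. \<not> (\<exists>\<^sub>F k in sequentially. x \<notin> B k)} \<subseteq> (\<Union>N. \<Inter>k\<in>{N..}. B k)"
      unfolding not_frequently eventually_sequentially by auto
  qed
qed

lemma AE_eventually_not_in:
  assumes sets: "\<And>i. A i \<in> sets M" and fin: "\<And>i. emeasure M (A i) < \<infinity>"
    and le: "\<forall>\<^sub>F i in sequentially. emeasure M (A i) \<le> ennreal (g i)"
    and g: "\<And>i. 0 \<le> g i" "summable g"
  shows "AE x in M. \<forall>\<^sub>F i in sequentially. x \<notin> A i"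
proof -
  have "\<forall>\<^sub>F i in sequentially. norm (measure M (A i)) \<le> g i"
    using le
  proof eventually_elim
    case (elim i)
    then show ?case
      using fin[of i] g(1)[of i] by (simp add: emeasure_eq_ennreal_measure ennreal_le_iff)
  qed
  then have "summable (\<lambda>i. measure M (A i))"
    using g(2) by (rule summable_comparison_test_ev)
  then have "AE x in M. \<forall>\<^sub>F i in sequentially. x \<in> space M - A i"
    using sets fin by (intro borel_cantelli_AE1)
  then show ?thesis
    by eventually_elim (auto elim: eventually_mono)
qed

lemma Liminf_le_of_frequently:
  fixes f g :: "'a \<Rightarrow> 'b::{complete_linorder, linorder_topology}"
  assumes freq: "\<exists>\<^sub>F x in F. f x \<le> g x" and lim: "(g \<longlongrightarrow> l) F"
  shows "Liminf F f \<le> l"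
proof (rule ccontr)
  assume "\<not> Liminf F f \<le> l"
  then have l: "l < Liminf F f" by simp
  have "\<forall>\<^sub>F x in F. g x < f x"
  proof (cases "\<exists>y. l < y \<and> y < Liminf F f")
    case True
    then obtain y where y: "l < y" "y < Liminf F f" by blast
    have "\<forall>\<^sub>F x in F. g x < y" using order_tendstoD(2)[OF lim y(1)] .
    moreover have "\<forall>\<^sub>F x in F. y < f x" using less_LiminfD[OF y(2)] .
    ultimately show ?thesis by eventually_elim (rule less_trans)
  next
    case False
    have "\<forall>\<^sub>F x in F. g x < Liminf F f" using order_tendstoD(2)[OF lim l] .
    moreover have "\<forall>\<^sub>F x in F. l < f x" using less_LiminfD[OF l] .
    ultimately show ?thesis
    proof eventually_elim
      case (elim x)
      then have "\<not> l < g x" using False by blast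
      then have "g x \<le> l" by (simp add: not_less)
      then show "g x < f x" using elim(2) by (rule le_less_trans)
    qed
  qed
  then have "\<forall>\<^sub>F x in F. \<not> f x \<le> g x"
    by (rule eventually_mono) (simp add: not_le)
  then show False
    using freq by (simp add: frequently_def)
qed

lemma frequently_sequentially_shift:
  "(\<exists>\<^sub>F k in sequentially. P (k + m)) \<Longrightarrow> \<exists>\<^sub>F n in sequentially. P n"
  unfolding frequently_def using eventually_sequentially_seg[of "\<lambda>n. \<not> P n" m] by simp

lemma log_ratio_mono:
  fixes n :: nat
  assumes "0 < y" "y \<le> z" "0 < ln (ln (real n))"
  shows "(ln y - ln (real n)) / ln (ln (real n)) \<le> (ln z - ln (real n)) / ln (ln (real n))"
  using assms by (intro divide_right_mono diff_right_mono ln_mono) auto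

lemma liminf_log_ratio_le:
  assumes pos: "\<forall>\<^sub>F n in sequentially. 0 < y n" and freq: "\<exists>\<^sub>F n in sequentially. y n \<le> b n"
    and lim: "((\<lambda>n. ereal ((ln (b n) - ln (real n)) / ln (ln (real n)))) \<longlongrightarrow> L) sequentially"
  shows "liminf (\<lambda>n. ereal ((ln (y n) - ln (real n)) / ln (ln (real n)))) \<le> L"
proof (rule Liminf_le_of_frequently[OF _ lim])
  have "\<forall>\<^sub>F n in sequentially. 0 < ln (ln (real n))" by real_asymp
  with pos have "\<forall>\<^sub>F n in sequentially. 0 < y n \<and> 0 < ln (ln (real n))"
    by (rule eventually_conj)
  with freq have "\<exists>\<^sub>F n in sequentially. (0 < y n \<and> 0 < ln (ln (real n))) \<and> y n \<le> b n"
    by (rule frequently_eventually_conj)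
  then show "\<exists>\<^sub>F n in sequentially.
      ereal ((ln (y n) - ln (real n)) / ln (ln (real n))) \<le> ereal ((ln (b n) - ln (real n)) / ln (ln (real n)))"
    by (rule frequently_elim1) (use log_ratio_mono in auto)
qed

lemma liminf_log_ratio_ge:
  assumes ev: "\<forall>\<^sub>F n in sequentially. 0 < b n \<and> b n \<le> y n"
    and lim: "((\<lambda>n. ereal ((ln (b n) - ln (real n)) / ln (ln (real n)))) \<longlongrightarrow> L) sequentially"
  shows "L \<le> liminf (\<lambda>n. ereal ((ln (y n) - ln (real n)) / ln (ln (real n))))"
proof -
  have "L = liminf (\<lambda>n. ereal ((ln (b n) - ln (real n)) / ln (ln (real n))))"
    using lim by (intro lim_imp_Liminf[symmetric]) auto
  also have "\<dots> \<le> liminf (\<lambda>n. ereal ((ln (y n) - ln (real n)) / ln (ln (real n))))"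
  proof (rule Liminf_mono)
    have "\<forall>\<^sub>F n in sequentially. 0 < ln (ln (real n))" by real_asymp
    with ev show "\<forall>\<^sub>F n in sequentially.
        ereal ((ln (b n) - ln (real n)) / ln (ln (real n))) \<le> ereal ((ln (y n) - ln (real n)) / ln (ln (real n)))"
      by eventually_elim (use log_ratio_mono in auto)
  qed
  finally show ?thesis .
qed

lemma power_one_minus_le_exp:
  fixes a :: real
  assumes "a \<le> 1"
  shows "(1 - a) ^ n \<le> exp (- (real n * a))"
proof -
  have "(1 - a) ^ n \<le> exp (- a) ^ n"
    using assms exp_ge_add_one_self[of "- a"] by (intro power_mono) auto
  also have "\<dots> = exp (- (real n * a))"
    by (simp add: exp_of_nat_mult[symmetric])
  finally show ?thesis .
qed

lemma dyadic_power_le_inverse_square: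
  fixes i :: nat
  defines "m \<equiv> 2 ^ (i + 1) / (24 * ln (real i + 1))"
  assumes m: "m \<ge> 1"
  shows "(1 - 1 / (3 * m)) ^ (2 ^ i - 1) \<le> 1 / (real i + 1) ^ 2"
proof -
  define P :: real where "P = 2 ^ i"
  define \<phi> where "\<phi> = 24 * ln (real i + 1)"
  have "i \<noteq> 0"
    using m unfolding m_def by (cases "i = 0") auto
  then have "(2::real) ^ 1 \<le> 2 ^ i" by (intro power_increasing) auto
  then have P: "P \<ge> 2" unfolding P_def by simp
  have \<phi>: "\<phi> > 0" unfolding \<phi>_def using \<open>i \<noteq> 0\<close> by simp
  have mP: "m = 2 * P / \<phi>"
    unfolding m_def P_def \<phi>_def by simp
  have "(1 - 1 / (3 * m)) ^ (2 ^ i - 1) \<le> exp (- (real (2 ^ i - 1 :: nat) * (1 / (3 * m))))"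
    using m by (intro power_one_minus_le_exp) simp
  also have "real (2 ^ i - 1 :: nat) * (1 / (3 * m)) = (P - 1) * \<phi> / (6 * P)"
    unfolding mP P_def using \<phi> by (simp add: of_nat_diff field_simps)
  also have "exp (- ((P - 1) * \<phi> / (6 * P))) \<le> exp (- (\<phi> / 12))"
  proof -
    have "P / 2 * \<phi> \<le> (P - 1) * \<phi>"
      using P \<phi> by (intro mult_right_mono) auto
    then have "\<phi> / 12 \<le> (P - 1) * \<phi> / (6 * P)"
      using P by (simp add: field_simps)
    then show ?thesis by simp
  qed
  also have "exp (- (\<phi> / 12)) = 1 / (real i + 1) ^ 2"
  proof -
    have "\<phi> / 12 = real (2::nat) * ln (real i + 1)"
      unfolding \<phi>_def by simp
    then have "exp (\<phi> / 12) = exp (ln (real i + 1)) ^ 2"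
      by (simp only: exp_of_nat_mult)
    also have "\<dots> = (real i + 1) ^ 2" by simp
    finally show ?thesis by (simp add: exp_minus field_simps)
  qed
  finally show ?thesis .
qed

lemma real_le_two_ln_of_power_le:
  assumes "2 ^ i \<le> n"
  shows "real i \<le> 2 * ln (real n)"
proof -
  have "real i * (2 / 3) \<le> real i * ln 2"
    using ln2_ge_two_thirds by (intro mult_left_mono) auto
  also have "\<dots> = ln (2 ^ i)" by (simp add: ln_realpow)
  also have "\<dots> \<le> ln (real n)"
    using assms by (intro ln_mono) (simp_all add: numeral_power_le_of_nat_cancel_iff[symmetric])
  finally show ?thesis by linarith
qed

lemma eventually_ge_of_dyadic_ge:
  fixes f :: "nat \<Rightarrow> real"
  assumes mono: "\<And>m n. 1 \<le> m \<Longrightarrow> m \<le> n \<Longrightarrow> f m \<le> f n"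
    and dyadic: "\<forall>\<^sub>F i in sequentially. 2 ^ (i + 1) / (24 * ln (real i + 1)) \<le> f (2 ^ i)"
  shows "\<forall>\<^sub>F n in sequentially. real n / (24 * ln (2 * ln (real n) + 1)) \<le> f n"
proof -
  obtain I where I: "\<And>i. I \<le> i \<Longrightarrow> 2 ^ (i + 1) / (24 * ln (real i + 1)) \<le> f (2 ^ i)"
    using dyadic unfolding eventually_sequentially by blast
  have "real n / (24 * ln (2 * ln (real n) + 1)) \<le> f n" if n: "2 ^ (I + 1) \<le> n" for n :: nat
  proof -
    have "1 \<le> n" by (rule le_trans[OF one_le_power n]) simp
    then obtain i where i: "2 ^ i \<le> n" "n < 2 ^ (i + 1)"
      using ex_power_ivl1[of 2 n] n by auto
    have "I < i"
    proof (rule ccontr)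
      assume "\<not> I < i"
      then have "(2::nat) ^ (i + 1) \<le> 2 ^ (I + 1)" by (intro power_increasing) auto
      then show False using i n by linarith
    qed
    have ln_pos: "0 < ln (real i + 1)" using \<open>I < i\<close> by simp
    have le: "ln (real i + 1) \<le> ln (2 * ln (real n) + 1)"
      using real_le_two_ln_of_power_le[OF i(1)] by (intro ln_mono) auto
    moreover have "0 < (24 * ln (2 * ln (real n) + 1)) * (24 * ln (real i + 1))"
      using ln_pos le by (intro mult_pos_pos) linarith+
    ultimately have "real n / (24 * ln (2 * ln (real n) + 1)) \<le> real n / (24 * ln (real i + 1))"
      by (intro divide_left_mono) auto
    also have "\<dots> \<le> 2 ^ (i + 1) / (24 * ln (real i + 1))"
    proof -
      have "real n \<le> 2 ^ (i + 1)"
        using i(2) by (metis less_imp_le of_nat_le_iff of_nat_numeral of_nat_power)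
      then show ?thesis using ln_pos by (intro divide_right_mono) auto
    qed
    also have "\<dots> \<le> f (2 ^ i)"
      using I \<open>I < i\<close> by simp
    also have "\<dots> \<le> f n"
      using i(1) by (intro mono) auto
    finally show ?thesis .
  qed
  then show ?thesis
    unfolding eventually_sequentially by blast
qed

section \<open>Almost sure behaviour of the ratios and their maxima\<close>

lemma AE_frequently_sengel_R_le_sqrt:
  "AE x in lborel. x \<in> {0<..<1} - \<rat> \<longrightarrow> (\<exists>\<^sub>F n in sequentially. sengel_R n x \<le> sqrt (real n))"
proof -
  define B where "B k = {x \<in> {0<..<1::real}. (engel_shift ^^ k) x \<in> ratio_exceeds (sqrt (real (k + 2)))}" for k
  have "AE x in lborel. \<exists>\<^sub>F k in sequentially. x \<notin> B k"
  proof (rule AE_frequently_not_in)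
    show "B k \<in> sets lborel" for k
      unfolding B_def by measurable
    have "emeasure lborel (B k) \<le> ennreal (3 / sqrt (real (k + 2)))" for k
      using emeasure_shift_funpow_ratio_exceeds_le[of "sqrt (real (k + 2))" 1 k] unfolding B_def by simp
    then show "\<forall>\<^sub>F k in sequentially. emeasure lborel (B k) \<le> ennreal (3 / sqrt (real (k + 2)))"
      by simp
    show "(\<lambda>k. 3 / sqrt (real (k + 2))) \<longlonglongrightarrow> 0"
      by real_asymp
  qed
  then show ?thesis
  proof eventually_elim
    case (elim x)
    show ?case
    proof
      assume x: "x \<in> {0<..<1} - \<rat>"
      have "\<exists>\<^sub>F k in sequentially. sengel_R (k + 2) x \<le> sqrt (real (k + 2))"
        using elim
      proof (rule frequently_elim1)
        fix k assume "x \<notin> B k"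
        then have "(engel_shift ^^ k) x \<notin> ratio_exceeds (sqrt (real (k + 2)))"
          using x unfolding B_def by simp
        then show "sengel_R (k + 2) x \<le> sqrt (real (k + 2))"
          using sengel_R_Suc_Suc_le_iff[OF x] by (simp add: add_2_eq_Suc')
      qed
      then show "\<exists>\<^sub>F n in sequentially. sengel_R n x \<le> sqrt (real n)"
        by (rule frequently_sequentially_shift)
    qed
  qed
qed

lemma emeasure_large_digit_or_ratio_le:
  assumes t: "t \<ge> 2"
  shows "emeasure lborel ({x \<in> {0<..<1::real}. t < engel_digit x}
      \<union> (\<Union>k<n. {x \<in> {0<..<1}. (engel_shift ^^ k) x \<in> ratio_exceeds t}))
    \<le> ennreal (1 / (t - 1) + 3 * real n / t)"
proof -
  define E where "E k = {x \<in> {0<..<1::real}. (engel_shift ^^ k) x \<in> ratio_exceeds t}" for k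
  have E: "E k \<in> sets lborel" for k
    unfolding E_def by measurable
  have first: "{x \<in> {0<..<1::real}. t < engel_digit x} \<in> sets lborel"
    by measurable
  have "emeasure lborel ({x \<in> {0<..<1::real}. t < engel_digit x} \<union> (\<Union>k<n. E k))
      \<le> emeasure lborel {x \<in> {0<..<1::real}. t < engel_digit x} + emeasure lborel (\<Union>k<n. E k)"
    using E first by (intro emeasure_subadditive sets.finite_UN) auto
  also have "\<dots> \<le> ennreal (1 / (t - 1)) + (\<Sum>k<n. emeasure lborel (E k))"
    using t E by (intro add_mono emeasure_digit_gt_le emeasure_subadditive_finite) auto
  also have "\<dots> \<le> ennreal (1 / (t - 1)) + (\<Sum>k<n. ennreal (3 / t))"
  proof (intro add_left_mono sum_mono)
    fix k
    show "emeasure lborel (E k) \<le> ennreal (3 / t)"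
      using emeasure_shift_funpow_ratio_exceeds_le[of t 1 k] t unfolding E_def by simp
  qed
  also have "(\<Sum>k<n. ennreal (3 / t)) = ennreal (3 * real n / t)"
    using t by (subst sum_ennreal) auto
  also have "ennreal (1 / (t - 1)) + ennreal (3 * real n / t) = ennreal (1 / (t - 1) + 3 * real n / t)"
    using t by simp
  finally show ?thesis unfolding E_def .
qed

lemma AE_frequently_sengel_M_le:
  "AE x in lborel. x \<in> {0<..<1} - \<rat> \<longrightarrow>
    (\<exists>\<^sub>F n in sequentially. sengel_M n x \<le> real n * ln (ln (real n)))"
proof -
  define t where "t n = real n * ln (ln (real n))" for n :: nat
  define B where "B n = {x \<in> {0<..<1::real}. t n < engel_digit x}
    \<union> (\<Union>k<n. {x \<in> {0<..<1}. (engel_shift ^^ k) x \<in> ratio_exceeds (t n)})" for n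
  have "AE x in lborel. \<exists>\<^sub>F n in sequentially. x \<notin> B n"
  proof (rule AE_frequently_not_in)
    show "B n \<in> sets lborel" for n
      unfolding B_def by (intro sets.Un sets.finite_UN) auto
    have "\<forall>\<^sub>F n in sequentially. 2 \<le> t n"
      unfolding t_def by real_asymp
    then show "\<forall>\<^sub>F n in sequentially. emeasure lborel (B n) \<le> ennreal (1 / (t n - 1) + 3 * real n / t n)"
      unfolding B_def by eventually_elim (rule emeasure_large_digit_or_ratio_le)
    show "(\<lambda>n. 1 / (t n - 1) + 3 * real n / t n) \<longlonglongrightarrow> 0"
      unfolding t_def by real_asymp
  qed
  then show ?thesis
  proof eventually_elim
    case (elim x)
    show ?case
    proof
      assume x: "x \<in> {0<..<1} - \<rat>"
      from elim eventually_ge_at_top[of 1]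
      have "\<exists>\<^sub>F n in sequentially. 1 \<le> n \<and> x \<notin> B n"
        by (rule frequently_eventually_conj)
      then show "\<exists>\<^sub>F n in sequentially. sengel_M n x \<le> real n * ln (ln (real n))"
      proof (rule frequently_elim1)
        fix n assume n: "1 \<le> n \<and> x \<notin> B n"
        have "sengel_M n x \<le> t n"
        proof (rule sengel_M_le_of_not_ratio_exceeds[OF x])
          show "1 \<le> n" using n by simp
          show "engel_digit x \<le> t n" using x n unfolding B_def by auto
          show "(engel_shift ^^ k) x \<notin> ratio_exceeds (t n)" if "k + 2 \<le> n" for k
            using x n that unfolding B_def by auto
        qed
        then show "sengel_M n x \<le> real n * ln (ln (real n))"
          unfolding t_def .
      qed
    qed
  qed
qed

lemma emeasure_dyadic_ratios_below_le:
  fixes i :: nat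
  defines "m \<equiv> 2 ^ (i + 1) / (24 * ln (real i + 1))"
  assumes m: "m \<ge> 1" and i: "i \<ge> 1"
  shows "emeasure lborel {x \<in> {0<..<1}. engel_shift x \<in> ratios_below m (2 ^ i - 1) (engel_digit x)}
    \<le> ennreal (inverse (real i ^ 2))"
proof -
  have "emeasure lborel {x \<in> {0<..<1}. engel_shift x \<in> ratios_below m (2 ^ i - 1) (engel_digit x)}
      \<le> ennreal ((1 - 1 / (3 * m)) ^ (2 ^ i - 1))"
    by (rule emeasure_shift_ratios_below_le[OF m])
  also have "\<dots> \<le> ennreal (1 / (real i + 1) ^ 2)"
    using dyadic_power_le_inverse_square m unfolding m_def by (intro ennreal_leI) blast
  also have "\<dots> \<le> ennreal (inverse (real i ^ 2))"
    using i by (intro ennreal_leI) (simp add: inverse_eq_divide frac_le)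
  finally show ?thesis .
qed

lemma AE_eventually_not_dyadic_run:
  "AE x in lborel. \<forall>\<^sub>F i in sequentially. x \<in> {0<..<1} \<longrightarrow>
    engel_shift x \<notin> ratios_below (2 ^ (i + 1) / (24 * ln (real i + 1))) (2 ^ i - 1) (engel_digit x)"
proof -
  define m where "m i = 2 ^ (i + 1) / (24 * ln (real i + 1))" for i :: nat
  define C where "C i = {x \<in> {0<..<1::real}. engel_shift x \<in> ratios_below (m i) (2 ^ i - 1) (engel_digit x)}" for i
  have "AE x in lborel. \<forall>\<^sub>F i in sequentially. x \<notin> C i"
  proof (rule AE_eventually_not_in)
    show "C i \<in> sets lborel" for i
    proof -
      have "{x. engel_shift x \<in> ratios_below (m i) (2 ^ i - 1) (engel_digit x)} \<in> sets borel"
        by (intro sets_engel_shift_dependent sets_ratios_below)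
      moreover have "C i = {0<..<1} \<inter> {x. engel_shift x \<in> ratios_below (m i) (2 ^ i - 1) (engel_digit x)}"
        unfolding C_def by auto
      ultimately show ?thesis by simp
    qed
    show "emeasure lborel (C i) < \<infinity>" for i
    proof -
      have "emeasure lborel (C i) \<le> emeasure lborel {0<..<1::real}"
        unfolding C_def by (intro emeasure_mono) auto
      also have "\<dots> < \<infinity>" by simp
      finally show ?thesis .
    qed
    have "\<forall>\<^sub>F i in sequentially. 1 \<le> m i"
      unfolding m_def by real_asymp
    then show "\<forall>\<^sub>F i in sequentially. emeasure lborel (C i) \<le> ennreal (inverse (real i ^ 2))"
      using eventually_ge_at_top[of 1]
      by eventually_elim (use emeasure_dyadic_ratios_below_le in \<open>simp add: C_def m_def\<close>)
    show "summable (\<lambda>i. inverse (real i ^ 2))"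
      by (rule inverse_power_summable) simp
  qed simp
  then show ?thesis
    by eventually_elim (auto simp: C_def m_def elim: eventually_mono)
qed

lemma AE_eventually_sengel_M_dyadic_ge:
  "AE x in lborel. x \<in> {0<..<1} - \<rat> \<longrightarrow>
    (\<forall>\<^sub>F i in sequentially. 2 ^ (i + 1) / (24 * ln (real i + 1)) \<le> sengel_M (2 ^ i) x)"
  using AE_eventually_not_dyadic_run
proof eventually_elim
  case (elim x)
  show ?case
  proof
    assume x: "x \<in> {0<..<1} - \<rat>"
    with elim show "\<forall>\<^sub>F i in sequentially. 2 ^ (i + 1) / (24 * ln (real i + 1)) \<le> sengel_M (2 ^ i) x"
      by (auto elim!: eventually_mono intro: le_sengel_M_of_not_ratios_below)
  qed
qed

lemma AE_eventually_sengel_M_ge: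
  "AE x in lborel. x \<in> {0<..<1} - \<rat> \<longrightarrow>
    (\<forall>\<^sub>F n in sequentially. real n / (24 * ln (2 * ln (real n) + 1)) \<le> sengel_M n x)"
  using AE_eventually_sengel_M_dyadic_ge
proof eventually_elim
  case (elim x)
  show ?case
  proof
    assume "x \<in> {0<..<1} - \<rat>"
    with elim show "\<forall>\<^sub>F n in sequentially. real n / (24 * ln (2 * ln (real n) + 1)) \<le> sengel_M n x"
      by (intro eventually_ge_of_dyadic_ge[where f = "\<lambda>n. sengel_M n x"] sengel_M_mono) auto
  qed
qed

lemma liminf_sengel_R_eq_MInfty:
  assumes x: "x \<in> {0<..<1} - \<rat>" and freq: "\<exists>\<^sub>F n in sequentially. sengel_R n x \<le> sqrt (real n)"
  shows "liminf (\<lambda>n. ereal ((ln (sengel_R n x) - ln (real n)) / ln (ln (real n)))) = -\<infinity>"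
proof -
  have "filterlim (\<lambda>n. (ln (sqrt (real n)) - ln (real n)) / ln (ln (real n))) at_bot sequentially"
    by real_asymp
  from iffD2[OF ereal_tendsto_simps2(3) this]
  have "((\<lambda>n. ereal ((ln (sqrt (real n)) - ln (real n)) / ln (ln (real n)))) \<longlongrightarrow> -\<infinity>) sequentially"
    unfolding comp_def .
  with sengel_R_pos[OF x] freq
  have "liminf (\<lambda>n. ereal ((ln (sengel_R n x) - ln (real n)) / ln (ln (real n)))) \<le> -\<infinity>"
    by (intro liminf_log_ratio_le) simp_all
  then show ?thesis by simp
qed

lemma liminf_sengel_M_eq_0:
  assumes x: "x \<in> {0<..<1} - \<rat>"
    and upper: "\<exists>\<^sub>F n in sequentially. sengel_M n x \<le> real n * ln (ln (real n))"
    and lower: "\<forall>\<^sub>F n in sequentially. real n / (24 * ln (2 * ln (real n) + 1)) \<le> sengel_M n x"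
  shows "liminf (\<lambda>n. ereal ((ln (sengel_M n x) - ln (real n)) / ln (ln (real n)))) = 0"
proof (rule antisym)
  have "\<forall>\<^sub>F n in sequentially. 0 < sengel_M n x"
    using eventually_ge_at_top[of 1] by (rule eventually_mono) (rule sengel_M_pos[OF x])
  moreover have "((\<lambda>n. ereal ((ln (real n * ln (ln (real n))) - ln (real n)) / ln (ln (real n)))) \<longlongrightarrow> 0) sequentially"
    unfolding zero_ereal_def by (intro tendsto_ereal) real_asymp
  ultimately show "liminf (\<lambda>n. ereal ((ln (sengel_M n x) - ln (real n)) / ln (ln (real n)))) \<le> 0"
    using upper by (intro liminf_log_ratio_le)
next
  have "\<forall>\<^sub>F n in sequentially. 0 < real n / (24 * ln (2 * ln (real n) + 1))"
    by real_asymp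
  with lower have "\<forall>\<^sub>F n in sequentially.
      0 < real n / (24 * ln (2 * ln (real n) + 1)) \<and> real n / (24 * ln (2 * ln (real n) + 1)) \<le> sengel_M n x"
    by (simp add: eventually_conj_iff)
  moreover have "((\<lambda>n. ereal ((ln (real n / (24 * ln (2 * ln (real n) + 1))) - ln (real n)) / ln (ln (real n))))
      \<longlongrightarrow> 0) sequentially"
    unfolding zero_ereal_def by (intro tendsto_ereal) real_asymp
  ultimately show "0 \<le> liminf (\<lambda>n. ereal ((ln (sengel_M n x) - ln (real n)) / ln (ln (real n))))"
    by (rule liminf_log_ratio_ge)
qed

theorem theorem1p8:
  shows "AE x in lborel. x \<in> {0<..<1::real} \<longrightarrow>
     liminf (\<lambda>n. ereal ((ln (sengel_R n x) - ln (real n)) / ln (ln (real n)))) = -\<infinity> \<and>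
     liminf (\<lambda>n. ereal ((ln (sengel_M n x) - ln (real n)) / ln (ln (real n)))) = 0"
proof -
  have "AE x in lborel. x \<notin> \<rat>"
    by (rule AE_not_in[OF countable_imp_null_set_lborel[OF countable_rat]])
  with AE_frequently_sengel_R_le_sqrt AE_frequently_sengel_M_le AE_eventually_sengel_M_ge
  show ?thesis
  proof eventually_elim
    case (elim x)
    show ?case
    proof
      assume "x \<in> {0<..<1}"
      with elim(4) have x: "x \<in> {0<..<1} - \<rat>" by simp
      show "liminf (\<lambda>n. ereal ((ln (sengel_R n x) - ln (real n)) / ln (ln (real n)))) = -\<infinity> \<and>
          liminf (\<lambda>n. ereal ((ln (sengel_M n x) - ln (real n)) / ln (ln (real n)))) = 0"
        using liminf_sengel_R_eq_MInfty[OF x] liminf_sengel_M_eq_0[OF x] elim(1-3) x by simp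
    qed
  qed
qed

end
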